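(* Let $T$ be a finite tree with at least one edge, and let $r\ge1$, $s\ge1$ be integers. There is a bijection between partitions of the vertex set of $T$ into $r+1$ non-empty parts, each $(s+1)$-scattered, and partitions of the edge set of $T$ into $r$ non-empty parts, each $s$-scattered.
   Context: For distinct vertices $v,w$ of a tree, their distance is the number of edges on the unique path between them. For distinct edges $e,e'$, their distance is $p-1$, where $e=e_1,e_2,\dots,e_p=e'$ is the shortest sequence of edges in which consecutive edges share a vertex (so two edges sharing a vertex have distance $1$). A set of vertices (resp. edges) is $s$-scattered if any two distinct elements have distance $\ge s$. *)

theory Defs
  imports Main "HOL-Library.Disjoint_Sets"
begin

definition vwalk :: "'a set set \<Rightarrow> 'a list \<Rightarrow> bool" where
  "vwalk E xs \<longleftrightarrow> xs \<noteq> [] \<and> (\<forall>i. Suc i < length xs \<longrightarrow> {xs ! i, xs ! Suc i} \<in> E)"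

definition tree :: "'a set \<Rightarrow> 'a set set \<Rightarrow> bool" where
  "tree V E \<longleftrightarrow> finite V \<and> V \<noteq> {} \<and>
     E \<subseteq> {{u, v} | u v. u \<in> V \<and> v \<in> V \<and> u \<noteq> v} \<and>
     (\<forall>u\<in>V. \<forall>v\<in>V. \<exists>!xs. vwalk E xs \<and> distinct xs \<and> hd xs = u \<and> last xs = v)"

definition vdist :: "'a set set \<Rightarrow> 'a \<Rightarrow> 'a \<Rightarrow> nat" where
  "vdist E u v = (LEAST n. \<exists>xs. vwalk E xs \<and> hd xs = u \<and> last xs = v \<and> length xs = Suc n)"

definition ewalk :: "'a set set \<Rightarrow> 'a set list \<Rightarrow> bool" where
  "ewalk E es \<longleftrightarrow> es \<noteq> [] \<and> set es \<subseteq> E \<and>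
     (\<forall>i. Suc i < length es \<longrightarrow> es ! i \<inter> es ! Suc i \<noteq> {})"

definition edist :: "'a set set \<Rightarrow> 'a set \<Rightarrow> 'a set \<Rightarrow> nat" where
  "edist E e e' = (LEAST n. \<exists>es. ewalk E es \<and> hd es = e \<and> last es = e' \<and> length es = Suc n)"

definition vscattered :: "'a set set \<Rightarrow> nat \<Rightarrow> 'a set \<Rightarrow> bool" where
  "vscattered E s S \<longleftrightarrow> (\<forall>u\<in>S. \<forall>v\<in>S. u \<noteq> v \<longrightarrow> s \<le> vdist E u v)"

definition escattered :: "'a set set \<Rightarrow> nat \<Rightarrow> 'a set set \<Rightarrow> bool" where
  "escattered E s F \<longleftrightarrow> (\<forall>e\<in>F. \<forall>e'\<in>F. e \<noteq> e' \<longrightarrow> s \<le> edist E e e')"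

end

theory Submission
  imports Defs
begin

text \<open>
  Partitions of V into (s + 1)-scattered sets are partitions into stable sets of the conflict
  relation "distance at most s", and partitions of E into s-scattered sets are partitions into
  stable sets of the conflict relation "some endpoints at distance at most s - 2". Choose a leaf l
  farthest from some vertex, with neighbour p. In both conflict relations the neighbourhood of l,
  respectively of the edge {p, l}, is a clique, so deleting it yields the recurrence
  c(k + 1) = c'(k) + (k + 1 - |N|) c'(k + 1) for the numbers of partitions into stable sets.
  The edges in conflict with {p, l} are the parent edges of the vertices other than p in conflict
  with l, so the vertex neighbourhood is exactly one larger. By induction on |V| there are as many
  vertex partitions into r + 1 parts as edge partitions into r parts.
\<close>

section \<open>Partitions into stable sets\<close>

definition stable_set :: "('b \<Rightarrow> 'b \<Rightarrow> bool) \<Rightarrow> 'b set \<Rightarrow> bool" where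
  "stable_set R X \<longleftrightarrow> (\<forall>u\<in>X. \<forall>v\<in>X. u \<noteq> v \<longrightarrow> \<not> R u v)"

definition clique :: "('b \<Rightarrow> 'b \<Rightarrow> bool) \<Rightarrow> 'b set \<Rightarrow> bool" where
  "clique R X \<longleftrightarrow> (\<forall>u\<in>X. \<forall>v\<in>X. u \<noteq> v \<longrightarrow> R u v)"

definition stable_partitions :: "'b set \<Rightarrow> ('b \<Rightarrow> 'b \<Rightarrow> bool) \<Rightarrow> nat \<Rightarrow> 'b set set set" where
  "stable_partitions A R k = {P. partition_on A P \<and> card P = k \<and> (\<forall>X\<in>P. stable_set R X)}"

lemma finite_stable_partitions: "finite A \<Longrightarrow> finite (stable_partitions A R k)"
  unfolding stable_partitions_def
  by (rule finite_subset[OF _ finitely_many_partition_on]) auto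

lemma stable_partitions_cong:
  assumes "\<And>u v. u \<in> A \<Longrightarrow> v \<in> A \<Longrightarrow> R u v = R' u v"
  shows "stable_partitions A R k = stable_partitions A R' k"
proof -
  have "stable_set R X = stable_set R' X" if "partition_on A P" "X \<in> P" for P X
    using assms that unfolding stable_set_def partition_on_def by blast
  thus ?thesis unfolding stable_partitions_def by blast
qed

lemma stable_partitions_0:
  assumes "A \<noteq> {}" "finite A" shows "stable_partitions A R 0 = {}"
proof -
  have "P \<noteq> {}" if "partition_on A P" for P
    using that assms(1) partition_onD1 by blast
  thus ?thesis
    using finite_elements[OF assms(2)] unfolding stable_partitions_def by auto
qed

lemma stable_partitions_singleton:
  "stable_partitions {v} R k = (if k = 1 then {{{v}}} else {})"
proof -
  have "partition_on {v} P \<longleftrightarrow> P = {{v}}" for P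
  proof
    assume "partition_on {v} P"
    hence "\<Union>P = {v}" "{} \<notin> P" unfolding partition_on_def by auto
    hence "X = {v}" if "X \<in> P" for X
      using that Union_upper[OF that] by (metis subset_singleton_iff)
    thus "P = {{v}}" using \<open>\<Union>P = {v}\<close> by blast
  qed (simp add: partition_on_space)
  thus ?thesis unfolding stable_partitions_def stable_set_def by auto
qed

lemma stable_partitions_empty: "stable_partitions {} R k = (if k = 0 then {{}} else {})"
  unfolding stable_partitions_def partition_on_empty by (auto simp: stable_set_def)

lemma card_blocks_avoiding_clique:
  assumes P: "partition_on A P" and fin: "finite A" and NA: "N \<subseteq> A"
    and stable: "\<forall>X\<in>P. stable_set R X" and cl: "clique R N"
  shows "card {Y\<in>P. Y \<inter> N = {}} = card P - card N"
proof -
  have "\<forall>y\<in>N. \<exists>Y\<in>P. y \<in> Y" using P NA unfolding partition_on_def by blast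
  then obtain block where block: "\<forall>y\<in>N. block y \<in> P \<and> y \<in> block y" by metis
  have "inj_on block N"
  proof (rule inj_onI)
    fix y z assume "y \<in> N" "z \<in> N" "block y = block z"
    thus "y = z" using block stable cl unfolding stable_set_def clique_def by metis
  qed
  moreover have "block ` N = {Y\<in>P. Y \<inter> N \<noteq> {}}"
  proof
    show "block ` N \<subseteq> {Y\<in>P. Y \<inter> N \<noteq> {}}" using block by blast
    show "{Y\<in>P. Y \<inter> N \<noteq> {}} \<subseteq> block ` N"
    proof
      fix Y assume "Y \<in> {Y\<in>P. Y \<inter> N \<noteq> {}}"
      then obtain y where "Y \<in> P" "y \<in> Y" "y \<in> N" by blast
      hence "block y = Y" using block P unfolding partition_on_def disjoint_def by blast
      thus "Y \<in> block ` N" using \<open>y \<in> N\<close> by blast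
    qed
  qed
  ultimately have "card {Y\<in>P. Y \<inter> N \<noteq> {}} = card N" by (metis card_image)
  moreover have "{Y\<in>P. Y \<inter> N = {}} = P - {Y\<in>P. Y \<inter> N \<noteq> {}}" by blast
  moreover have "finite P" using finite_elements[OF fin P] .
  ultimately show ?thesis by (simp add: card_Diff_subset)
qed

lemma partition_on_insert_singleton:
  "partition_on A Q \<Longrightarrow> x \<notin> A \<Longrightarrow> partition_on (insert x A) (insert {x} Q)"
  by (auto simp: partition_on_def disjoint_def)

lemma disjnt_block_Union_others:
  "partition_on A P \<Longrightarrow> X \<in> P \<Longrightarrow> disjnt X (\<Union>(P - {X}))"
  unfolding partition_on_def disjoint_def disjnt_def by blast

lemma partition_on_remove_singleton:
  assumes P: "partition_on (insert x A) P" and "{x} \<in> P" "x \<notin> A"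
  shows "partition_on A (P - {{x}})"
proof -
  have "partition_on (insert x A) (insert {x} (P - {{x}}))"
    using P \<open>{x} \<in> P\<close> by (simp add: insert_absorb)
  hence "partition_on (insert x A - {x}) (P - {{x}})"
    using partition_on_insert[OF disjnt_block_Union_others[OF P \<open>{x} \<in> P\<close>]] by simp
  thus ?thesis using \<open>x \<notin> A\<close> by simp
qed

lemma partition_on_insert_into_block:
  "partition_on A Q \<Longrightarrow> Y \<in> Q \<Longrightarrow> x \<notin> A \<Longrightarrow>
   partition_on (insert x A) (insert (insert x Y) (Q - {Y}))"
  by (auto simp: partition_on_def disjoint_def)

lemma partition_on_remove_from_block:
  assumes P: "partition_on (insert x A) P" and X: "X \<in> P" "x \<in> X" "X \<noteq> {x}" and "x \<notin> A"
  shows "partition_on A (insert (X - {x}) (P - {X}))"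
proof -
  have d: "disjnt X (\<Union>(P - {X}))" using disjnt_block_Union_others[OF P X(1)] .
  have "partition_on (insert x A) (insert X (P - {X}))" using P X(1) by (simp add: insert_absorb)
  hence rest: "partition_on (insert x A - X) (P - {X})" "X \<subseteq> insert x A"
    using partition_on_insert[OF d] by auto
  have "disjnt (X - {x}) (\<Union>(P - {X}))" using d by (auto simp: disjnt_def)
  moreover have "A - (X - {x}) = insert x A - X" using X \<open>x \<notin> A\<close> by auto
  moreover have "X - {x} \<subseteq> A" "X - {x} \<noteq> {}" using rest(2) X \<open>x \<notin> A\<close> by auto
  ultimately show ?thesis using rest(1) partition_on_insert by metis
qed

lemma card_stable_partitions_with_singleton:
  assumes "finite A" "x \<notin> A"
  shows "card {P \<in> stable_partitions (insert x A) R (Suc k). {x} \<in> P} = card (stable_partitions A R k)"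
proof -
  let ?S1 = "{P \<in> stable_partitions (insert x A) R (Suc k). {x} \<in> P}"
  have no_x: "{x} \<notin> Q" if "partition_on A Q" for Q
    using that assms(2) unfolding partition_on_def by auto
  have "bij_betw (insert {x}) (stable_partitions A R k) ?S1"
  proof (rule bij_betw_byWitness[where f' = "\<lambda>P. P - {{x}}"])
    show "\<forall>Q\<in>stable_partitions A R k. insert {x} Q - {{x}} = Q"
      using no_x unfolding stable_partitions_def by auto
    show "\<forall>P\<in>?S1. insert {x} (P - {{x}}) = P" by auto
    show "insert {x} ` stable_partitions A R k \<subseteq> ?S1"
    proof
      fix P assume "P \<in> insert {x} ` stable_partitions A R k"
      then obtain Q where Q: "partition_on A Q" "card Q = k" "\<forall>X\<in>Q. stable_set R X"
        and P: "P = insert {x} Q" unfolding stable_partitions_def by blast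
      have "card P = Suc k" using P Q(2) no_x[OF Q(1)] finite_elements[OF assms(1) Q(1)] by simp
      moreover have "stable_set R {x}" by (simp add: stable_set_def)
      ultimately show "P \<in> ?S1"
        using partition_on_insert_singleton[OF Q(1) assms(2)] P Q(3)
        unfolding stable_partitions_def by simp
    qed
    show "(\<lambda>P. P - {{x}}) ` ?S1 \<subseteq> stable_partitions A R k"
    proof
      fix Q assume "Q \<in> (\<lambda>P. P - {{x}}) ` ?S1"
      then obtain P where P: "partition_on (insert x A) P" "card P = Suc k"
          "\<forall>X\<in>P. stable_set R X" "{x} \<in> P" and Q: "Q = P - {{x}}"
        unfolding stable_partitions_def by blast
      have "card Q = k" using P Q finite_elements[OF _ P(1)] assms(1) by simp
      thus "Q \<in> stable_partitions A R k"
        using partition_on_remove_singleton[OF P(1) P(4) assms(2)] P(3) Q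
        unfolding stable_partitions_def by simp
    qed
  qed
  thus ?thesis by (simp add: bij_betw_same_card)
qed

lemma add_to_block_in_stable_partitions:
  assumes "finite A" "x \<notin> A" and R_sym: "symp_on (insert x A) R"
    and Q: "Q \<in> stable_partitions A R k" and Y: "Y \<in> Q" "\<forall>y\<in>Y. \<not> R x y"
  shows "insert (insert x Y) (Q - {Y}) \<in> {P \<in> stable_partitions (insert x A) R k. {x} \<notin> P}"
proof -
  have Q': "partition_on A Q" "card Q = k" "\<forall>X\<in>Q. stable_set R X"
    using Q unfolding stable_partitions_def by auto
  have blocks: "\<forall>Z\<in>Q. x \<notin> Z \<and> Z \<noteq> {} \<and> Z \<subseteq> A"
    using Q'(1) assms(2) unfolding partition_on_def by auto
  have "insert x Y \<notin> Q - {Y}" using blocks by auto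
  hence "card (insert (insert x Y) (Q - {Y})) = k"
    using Y(1) Q'(2) finite_elements[OF assms(1) Q'(1)]
    by (metis card_Suc_Diff1 card_insert_disjoint finite_Diff)
  moreover have "\<not> R y x" if "y \<in> Y" for y
    using Y that blocks R_sym by (meson insertCI subsetD symp_onD)
  hence "stable_set R (insert x Y)"
    using Q'(3) Y unfolding stable_set_def by auto
  ultimately show ?thesis
    using partition_on_insert_into_block[OF Q'(1) Y(1) assms(2)] Q'(3) blocks Y(1)
    unfolding stable_partitions_def by auto
qed

lemma remove_from_block_in_stable_partitions:
  assumes "finite A" "x \<notin> A" and P: "P \<in> stable_partitions (insert x A) R k" "{x} \<notin> P"
    and X: "X \<in> P" "x \<in> X"
  shows "insert (X - {x}) (P - {X}) \<in> stable_partitions A R k" "\<forall>y\<in>X - {x}. \<not> R x y"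
    and "X - {x} \<notin> P - {X}"
proof -
  have P': "partition_on (insert x A) P" "card P = k" "\<forall>X\<in>P. stable_set R X"
    using P unfolding stable_partitions_def by auto
  have "X \<noteq> {x}" using X P(2) by auto
  show new: "X - {x} \<notin> P - {X}"
  proof
    assume "X - {x} \<in> P - {X}"
    hence "disjnt X (X - {x})" using pairwiseD[OF partition_onD2[OF P'(1)] X(1)] by blast
    moreover have "X - {x} \<noteq> {}" using X \<open>X \<noteq> {x}\<close> by auto
    ultimately show False by (auto simp: disjnt_def)
  qed
  have "finite P" using finite_elements[OF _ P'(1)] assms(1) by simp
  hence "card (insert (X - {x}) (P - {X})) = k"
    using new P'(2) X(1) by (metis card_Suc_Diff1 card_insert_disjoint finite_Diff)
  moreover have "partition_on A (insert (X - {x}) (P - {X}))"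
    using partition_on_remove_from_block[OF P'(1) X \<open>X \<noteq> {x}\<close> assms(2)] .
  moreover have "\<forall>Z\<in>insert (X - {x}) (P - {X}). stable_set R Z"
    using P'(3) X unfolding stable_set_def by auto
  ultimately show "insert (X - {x}) (P - {X}) \<in> stable_partitions A R k"
    unfolding stable_partitions_def by simp
  show "\<forall>y\<in>X - {x}. \<not> R x y" using P'(3) X unfolding stable_set_def by auto
qed

lemma bij_betw_add_to_block:
  assumes "finite A" "x \<notin> A" "symp_on (insert x A) R"
  shows "bij_betw (\<lambda>(Q, Y). insert (insert x Y) (Q - {Y}))
     (SIGMA Q:stable_partitions A R k. {Y\<in>Q. \<forall>y\<in>Y. \<not> R x y})
     {P \<in> stable_partitions (insert x A) R k. {x} \<notin> P}"
    (is "bij_betw ?add ?T ?S2")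
proof (rule bij_betw_imageI)
  show "inj_on ?add ?T"
  proof (rule inj_onI)
    fix a b assume "a \<in> ?T" "b \<in> ?T" and eq: "?add a = ?add b"
    then obtain Q Y Q' Y' where ab: "a = (Q, Y)" "b = (Q', Y')"
      and Q: "partition_on A Q" "Y \<in> Q" "partition_on A Q'" "Y' \<in> Q'"
      unfolding stable_partitions_def by auto
    have x_free: "x \<notin> Z" if "Z \<in> Q \<union> Q'" for Z
      using that Q assms(2) unfolding partition_on_def by auto
    have eq': "insert (insert x Y) (Q - {Y}) = insert (insert x Y') (Q' - {Y'})"
      using eq ab by simp
    hence "insert x Y = insert x Y'" using x_free by blast
    hence "Y = Y'" using x_free Q by (metis UnI1 UnI2 insert_ident)
    have "insert x Y \<notin> Q - {Y}" "insert x Y \<notin> Q' - {Y}" using x_free by auto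
    hence "Q - {Y} = Q' - {Y}" using eq' \<open>Y = Y'\<close> by (metis Diff_insert_absorb)
    hence "Q = Q'" using Q \<open>Y = Y'\<close> by (metis insert_Diff)
    thus "a = b" using ab \<open>Y = Y'\<close> by simp
  qed
  show "?add ` ?T = ?S2"
  proof
    show "?add ` ?T \<subseteq> ?S2" using add_to_block_in_stable_partitions[OF assms] by auto
    show "?S2 \<subseteq> ?add ` ?T"
    proof
      fix P assume P: "P \<in> ?S2"
      then obtain X where X: "X \<in> P" "x \<in> X"
        unfolding stable_partitions_def partition_on_def by auto
      note removed = remove_from_block_in_stable_partitions[OF assms(1,2) _ _ X, of R k]
      have "(insert (X - {x}) (P - {X}), X - {x}) \<in> ?T" using removed(1,2) P by simp
      moreover have "?add (insert (X - {x}) (P - {X}), X - {x}) = P"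
        using X removed(3) P by (simp add: insert_absorb)
      ultimately show "P \<in> ?add ` ?T" by (rule rev_image_eqI[OF _ sym])
    qed
  qed
qed

text \<open>Either {x} is a block, or x joins one of the blocks avoiding its neighbourhood N; as N is
  a clique, its elements lie in distinct blocks, so there are Suc k - card N such blocks.\<close>
lemma card_stable_partitions_insert:
  assumes fin: "finite A" and x: "x \<notin> A" and R_sym: "symp_on (insert x A) R"
    and cl: "clique R {y\<in>A. R x y}"
  shows "card (stable_partitions (insert x A) R (Suc k)) =
     card (stable_partitions A R k) + (Suc k - card {y\<in>A. R x y}) * card (stable_partitions A R (Suc k))"
proof -
  let ?S = "stable_partitions (insert x A) R (Suc k)" and ?N = "{y\<in>A. R x y}"
    and ?SP = "stable_partitions A R (Suc k)"
  have "card ?S = card ({P \<in> ?S. {x} \<in> P} \<union> {P \<in> ?S. {x} \<notin> P})"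
    by (rule arg_cong[where f = card]) blast
  also have "\<dots> = card {P \<in> ?S. {x} \<in> P} + card {P \<in> ?S. {x} \<notin> P}"
    using finite_stable_partitions[OF finite_insert[THEN iffD2, OF fin]]
    by (intro card_Un_disjoint) auto
  also have "card {P \<in> ?S. {x} \<in> P} = card (stable_partitions A R k)"
    using card_stable_partitions_with_singleton[OF fin x] .
  also have "card {P \<in> ?S. {x} \<notin> P} = card (SIGMA Q:?SP. {Y\<in>Q. \<forall>y\<in>Y. \<not> R x y})"
    using bij_betw_same_card[OF bij_betw_add_to_block[OF fin x R_sym, where k = "Suc k"]] by (rule sym)
  also have "\<dots> = (\<Sum>Q\<in>?SP. card {Y\<in>Q. \<forall>y\<in>Y. \<not> R x y})"
    using finite_stable_partitions[OF fin] finite_elements[OF fin]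
    by (intro card_SigmaI) (auto simp: stable_partitions_def)
  also have "\<dots> = (\<Sum>Q\<in>?SP. Suc k - card ?N)"
  proof (rule sum.cong)
    fix Q assume "Q \<in> ?SP"
    hence Q: "partition_on A Q" "card Q = Suc k" "\<forall>X\<in>Q. stable_set R X"
      unfolding stable_partitions_def by auto
    have "\<forall>Y\<in>Q. Y \<subseteq> A" using partition_onD1[OF Q(1)] by blast
    hence "{Y\<in>Q. \<forall>y\<in>Y. \<not> R x y} = {Y\<in>Q. Y \<inter> ?N = {}}" by blast
    thus "card {Y\<in>Q. \<forall>y\<in>Y. \<not> R x y} = Suc k - card ?N"
      using card_blocks_avoiding_clique[OF Q(1) fin _ Q(3) cl] Q(2) by simp
  qed simp
  finally show ?thesis by simp
qed

section \<open>Walks\<close>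

lemma successively_conv_nth:
  "successively P xs \<longleftrightarrow> (\<forall>i. Suc i < length xs \<longrightarrow> P (xs ! i) (xs ! Suc i))"
proof (induction P xs rule: successively.induct)
  case (3 P x y xs)
  thus ?case by (auto simp: All_less_Suc2 nth_Cons' less_Suc_eq_0_disj)
qed auto

lemma vwalk_singleton[simp]: "vwalk E [x]"
  unfolding vwalk_def by simp

lemma vwalk_Nil[simp]: "\<not> vwalk E []"
  unfolding vwalk_def by simp

lemma vwalk_iff_successively: "vwalk E xs \<longleftrightarrow> xs \<noteq> [] \<and> successively (\<lambda>u v. {u, v} \<in> E) xs"
  unfolding vwalk_def successively_conv_nth ..

lemma ewalk_iff_successively:
  "ewalk E es \<longleftrightarrow> es \<noteq> [] \<and> set es \<subseteq> E \<and> successively (\<lambda>e f. e \<inter> f \<noteq> {}) es"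
  unfolding ewalk_def successively_conv_nth ..

lemma vwalk_Cons_Cons[simp]: "vwalk E (x # y # xs) \<longleftrightarrow> {x, y} \<in> E \<and> vwalk E (y # xs)"
  by (simp add: vwalk_iff_successively)

lemma vwalk_append:
  assumes "xs \<noteq> []" "ys \<noteq> []"
  shows "vwalk E (xs @ ys) \<longleftrightarrow> vwalk E xs \<and> vwalk E ys \<and> {last xs, hd ys} \<in> E"
  using assms by (auto simp: vwalk_iff_successively successively_append_iff)

lemma vwalk_rev: "vwalk E xs \<Longrightarrow> vwalk E (rev xs)"
  by (simp add: vwalk_iff_successively insert_commute)

lemma vwalk_appendD1: "vwalk E (xs @ ys) \<Longrightarrow> xs \<noteq> [] \<Longrightarrow> vwalk E xs"
  by (cases "ys = []") (auto simp: vwalk_append)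

lemma vwalk_appendD2: "vwalk E (xs @ ys) \<Longrightarrow> ys \<noteq> [] \<Longrightarrow> vwalk E ys"
  by (cases "xs = []") (auto simp: vwalk_append)

lemma vwalk_infixD: "vwalk E (as @ ys @ bs) \<Longrightarrow> ys \<noteq> [] \<Longrightarrow> vwalk E ys"
  by (metis append.assoc vwalk_appendD1 vwalk_appendD2 append_is_Nil_conv)

lemma vwalk_mono: "vwalk E' xs \<Longrightarrow> E' \<subseteq> E \<Longrightarrow> vwalk E xs"
  unfolding vwalk_def by blast

lemma vwalk_contains_path:
  "vwalk E ys \<Longrightarrow> \<exists>zs. vwalk E zs \<and> distinct zs \<and> hd zs = hd ys \<and> last zs = last ys \<and> length zs \<le> length ys"
proof (induction "length ys" arbitrary: ys rule: less_induct)
  case less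
  show ?case
  proof (cases "distinct ys")
    case True thus ?thesis using less.prems by blast
  next
    case False
    then obtain as w bs cs where ys: "ys = as @ [w] @ bs @ [w] @ cs"
      using not_distinct_decomp by blast
    define ys' where "ys' = as @ [w] @ cs"
    have w1: "vwalk E (as @ [w])" using vwalk_appendD1[of E "as @ [w]" "bs @ [w] @ cs"] less.prems ys by simp
    have w2: "vwalk E ([w] @ cs)" using vwalk_appendD2[of E "as @ [w] @ bs" "[w] @ cs"] less.prems ys by simp
    have "vwalk E ys'"
    proof (cases cs)
      case Nil thus ?thesis using w1 ys'_def by simp
    next
      case (Cons c cs')
      have "{w, c} \<in> E" using w2 Cons by simp
      moreover have "vwalk E cs" using w2 Cons by simp
      ultimately show ?thesis unfolding ys'_def using w1 vwalk_append[of "as @ [w]" cs E] Cons by simp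
    qed
    moreover have "length ys' < length ys" unfolding ys'_def ys by simp
    moreover have "hd ys' = hd ys" "last ys' = last ys" unfolding ys'_def ys
      by (cases as; simp) (cases cs; simp)
    ultimately show ?thesis using less.hyps[of ys'] by fastforce
  qed
qed

lemma ewalk_singleton[simp]: "ewalk E [e] \<longleftrightarrow> e \<in> E"
  unfolding ewalk_def by simp

lemma ewalk_Cons_Cons[simp]: "ewalk E (e # f # es) \<longleftrightarrow> e \<in> E \<and> e \<inter> f \<noteq> {} \<and> ewalk E (f # es)"
  by (auto simp: ewalk_iff_successively)

section \<open>Distances in a tree\<close>

locale tree_graph =
  fixes V :: "'a set" and E :: "'a set set"
  assumes tree: "tree V E"
begin

abbreviation "d \<equiv> vdist E"

lemma finite_V: "finite V" and V_nonempty: "V \<noteq> {}"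
  using tree unfolding tree_def by auto

lemma edgeD: "e \<in> E \<Longrightarrow> \<exists>u v. e = {u, v} \<and> u \<in> V \<and> v \<in> V \<and> u \<noteq> v"
  using tree unfolding tree_def by blast

lemma edge_endpoints: "{x, y} \<in> E \<Longrightarrow> x \<noteq> y \<and> x \<in> V \<and> y \<in> V"
  using edgeD[of "{x,y}"] by (metis doubleton_eq_iff)

lemma unique_path: "u \<in> V \<Longrightarrow> v \<in> V \<Longrightarrow> \<exists>!xs. vwalk E xs \<and> distinct xs \<and> hd xs = u \<and> last xs = v"
  using tree unfolding tree_def by blast

lemma path_unique: "vwalk E xs \<Longrightarrow> distinct xs \<Longrightarrow> vwalk E ys \<Longrightarrow> distinct ys \<Longrightarrow> hd xs = hd ys \<Longrightarrow>
   last xs = last ys \<Longrightarrow> hd xs \<in> V \<Longrightarrow> last xs \<in> V \<Longrightarrow> xs = ys"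
  using unique_path by metis

lemma vwalk_in_V: "vwalk E xs \<Longrightarrow> hd xs \<in> V \<Longrightarrow> set xs \<subseteq> V"
proof (induction xs rule: induct_list012)
  case (3 x y zs)
  thus ?case using edge_endpoints[of x y] by auto
qed auto

lemma path_exists: "u \<in> V \<Longrightarrow> v \<in> V \<Longrightarrow> \<exists>xs. vwalk E xs \<and> distinct xs \<and> hd xs = u \<and> last xs = v"
  using unique_path by blast

lemma dist_path_length:
  assumes w: "vwalk E xs" and di: "distinct xs" and h: "hd xs \<in> V"
  shows "d (hd xs) (last xs) = length xs - 1"
proof -
  define P where "P = (\<lambda>n. \<exists>ys. vwalk E ys \<and> hd ys = hd xs \<and> last ys = last xs \<and> length ys = Suc n)"
  have ne: "xs \<noteq> []" using w by auto
  have lV: "last xs \<in> V" using vwalk_in_V[OF w h] ne by auto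
  have "P (length xs - 1)" unfolding P_def using w ne by (intro exI[of _ xs]) auto
  hence le1: "Least P \<le> length xs - 1" by (rule Least_le)
  have "P (Least P)" using \<open>P (length xs - 1)\<close> by (rule LeastI)
  then obtain ys where ys: "vwalk E ys" "hd ys = hd xs" "last ys = last xs" "length ys = Suc (Least P)"
    unfolding P_def by blast
  obtain zs where zs: "vwalk E zs" "distinct zs" "hd zs = hd ys" "last zs = last ys" "length zs \<le> length ys"
    using vwalk_contains_path[OF ys(1)] by blast
  have "zs = xs" using path_unique[OF zs(1,2) w di] zs ys h lV by simp
  hence "length xs - 1 \<le> Least P" using zs ys by simp
  moreover have "d (hd xs) (last xs) = Least P" unfolding vdist_def P_def by simp
  ultimately show ?thesis using le1 by simp
qed

lemma dist_le_walk_length: "u \<in> V \<Longrightarrow> vwalk E ys \<Longrightarrow> hd ys = u \<Longrightarrow> last ys = v \<Longrightarrow> d u v + 1 \<le> length ys"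
proof -
  assume a: "u \<in> V" "vwalk E ys" "hd ys = u" "last ys = v"
  obtain zs where zs: "vwalk E zs" "distinct zs" "hd zs = hd ys" "last zs = last ys" "length zs \<le> length ys"
    using vwalk_contains_path[OF a(2)] by blast
  have "zs \<noteq> []" using zs by auto
  thus ?thesis using dist_path_length[OF zs(1,2)] zs a by simp
qed

lemma dist_sym: assumes "u \<in> V" "v \<in> V" shows "d u v = d v u"
proof -
  obtain xs where xs: "vwalk E xs" "distinct xs" "hd xs = u" "last xs = v" using path_exists assms by blast
  have ne: "xs \<noteq> []" using xs by auto
  have "d u v = length xs - 1" using dist_path_length[OF xs(1,2)] xs assms by simp
  moreover have "d v u = length (rev xs) - 1" using dist_path_length[OF vwalk_rev[OF xs(1)]] xs assms ne
    by (simp add: hd_rev last_rev)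
  ultimately show ?thesis by simp
qed

lemma dist_self[simp]: "u \<in> V \<Longrightarrow> d u u = 0"
  using dist_path_length[of "[u]"] by simp

lemma dist_eq_0D: assumes "u \<in> V" "v \<in> V" "d u v = 0" shows "u = v"
proof -
  obtain xs where xs: "vwalk E xs" "distinct xs" "hd xs = u" "last xs = v" using path_exists assms by blast
  have "length xs = 1" using dist_path_length[OF xs(1,2)] xs assms by (cases xs) auto
  thus ?thesis using xs by (cases xs) auto
qed

lemma dist_edge: "{u, v} \<in> E \<Longrightarrow> d u v = 1"
  using dist_path_length[of "[u, v]"] edge_endpoints[of u v] by simp

lemma dist_triangle: assumes "u \<in> V" "v \<in> V" "w \<in> V" shows "d u w \<le> d u v + d v w"
proof -
  obtain xs where xs: "vwalk E xs" "distinct xs" "hd xs = u" "last xs = v" using path_exists assms by blast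
  obtain ys where ys: "vwalk E ys" "distinct ys" "hd ys = v" "last ys = w" using path_exists assms by blast
  have nx: "xs \<noteq> []" "ys \<noteq> []" using xs ys by auto
  have "vwalk E (xs @ tl ys)"
  proof (cases "tl ys")
    case Nil thus ?thesis using xs by simp
  next
    case (Cons y ys')
    hence "ys = v # y # ys'" using ys nx by (cases ys) auto
    thus ?thesis using ys xs vwalk_append[of xs "tl ys" E] nx Cons by simp
  qed
  moreover have "hd (xs @ tl ys) = u" using xs nx by simp
  moreover have "last (xs @ tl ys) = w" using xs ys nx by (cases ys) auto
  ultimately have "d u w + 1 \<le> length (xs @ tl ys)" using dist_le_walk_length assms by blast
  moreover have "d u v = length xs - 1" using dist_path_length[OF xs(1,2)] xs assms by simp
  moreover have "d v w = length ys - 1" using dist_path_length[OF ys(1,2)] ys assms by simp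
  ultimately show ?thesis using nx by simp
qed

lemma dist_along_path:
  assumes w: "vwalk E (as @ m # bs)" and di: "distinct (as @ m # bs)" and h: "hd (as @ m # bs) \<in> V"
  shows "d (hd (as @ m # bs)) m = length as" "d m (last (as @ m # bs)) = length bs" "m \<in> V"
proof -
  have sV: "set (as @ m # bs) \<subseteq> V" using vwalk_in_V[OF w h] .
  have w1: "vwalk E (as @ [m])" using vwalk_appendD1[of E "as @ [m]" bs] w by simp
  have w2: "vwalk E (m # bs)" using vwalk_appendD2[of E as "m # bs"] w by simp
  have "d (hd (as @ [m])) (last (as @ [m])) = length (as @ [m]) - 1"
    using dist_path_length[OF w1] di h by (cases as) auto
  thus "d (hd (as @ m # bs)) m = length as" by (cases as) auto
  have "d (hd (m # bs)) (last (m # bs)) = length (m # bs) - 1"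
    using dist_path_length[OF w2] di sV by auto
  thus "d m (last (as @ m # bs)) = length bs" by simp
  show "m \<in> V" using sV by auto
qed

lemma dist_adjacent: assumes e: "{x, y} \<in> E" and z: "z \<in> V"
  shows "d z y = d z x + 1 \<or> d z x = d z y + 1"
proof -
  have xy: "x \<noteq> y" "x \<in> V" "y \<in> V" using edge_endpoints[OF e] by auto
  obtain xs where xs: "vwalk E xs" "distinct xs" "hd xs = z" "last xs = x" using path_exists z xy by blast
  have ne: "xs \<noteq> []" using xs by auto
  have dx: "d z x = length xs - 1" using dist_path_length[OF xs(1,2)] xs z by simp
  show ?thesis
  proof (cases "y \<in> set xs")
    case False
    have w: "vwalk E (xs @ [y])" using vwalk_append[of xs "[y]" E] xs ne e by simp
    have "d z y = length (xs @ [y]) - 1" using dist_path_length[OF w] xs False ne z by simp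
    thus ?thesis using dx ne by simp
  next
    case True
    then obtain as bs where xsd: "xs = as @ y # bs" by (meson split_list)
    have "bs \<noteq> []" using xsd xs xy by auto
    hence xb: "x \<in> set bs" using xsd xs by (metis last_appendR last_in_set list.distinct(1) last_ConsR)
    have w1: "vwalk E (as @ [y])" using vwalk_appendD1[of E "as @ [y]" bs] xs xsd by simp
    have "{y, x} \<in> E" using e by (simp add: insert_commute)
    hence w2: "vwalk E (as @ [y, x])" using vwalk_append[of "as @ [y]" "[x]" E] w1 by simp
    have d2: "distinct (as @ [y, x])" using xs(2) xsd xb xy by auto
    have "as @ [y, x] = xs" using path_unique[OF w2 d2 xs(1,2)] xs xsd z xy by (cases as) auto
    hence "d z x = length as + 1" using dx by auto
    moreover have "d z y = length as" using dist_along_path(1)[of as y bs] xs xsd z by simp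
    ultimately show ?thesis by simp
  qed
qed

lemma parent_unique: assumes "{x, u} \<in> E" "{y, u} \<in> E" "d z x + 1 = d z u" "d z y + 1 = d z u" "z \<in> V"
  shows "x = y"
proof -
  have V: "x \<in> V" "y \<in> V" "u \<in> V" using edge_endpoints assms by auto
  have ext: "\<exists>xs. vwalk E (xs @ [u]) \<and> distinct (xs @ [u]) \<and> hd (xs @ [u]) = z \<and> last xs = x \<and> xs \<noteq> []"
    if a: "{x, u} \<in> E" "d z x + 1 = d z u" "x \<in> V" for x
  proof -
    obtain xs where xs: "vwalk E xs" "distinct xs" "hd xs = z" "last xs = x" using path_exists assms(5) a by blast
    have ne: "xs \<noteq> []" using xs by auto
    have dx: "d z x = length xs - 1" using dist_path_length[OF xs(1,2)] xs assms by simp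
    have "u \<notin> set xs"
    proof
      assume "u \<in> set xs"
      then obtain as bs where xsd: "xs = as @ u # bs" by (meson split_list)
      have "d z u = length as" using dist_along_path(1)[of as u bs] xs xsd assms by simp
      thus False using dx xsd a by simp
    qed
    moreover have "vwalk E (xs @ [u])" using vwalk_append[of xs "[u]" E] xs ne a by simp
    ultimately show ?thesis using xs ne by auto
  qed
  obtain xs where xs: "vwalk E (xs @ [u])" "distinct (xs @ [u])" "hd (xs @ [u]) = z" "last xs = x" "xs \<noteq> []"
    using ext[OF assms(1,3) V(1)] by blast
  obtain ys where ys: "vwalk E (ys @ [u])" "distinct (ys @ [u])" "hd (ys @ [u]) = z" "last ys = y" "ys \<noteq> []"
    using ext[OF assms(2,4) V(2)] by blast
  have "xs @ [u] = ys @ [u]" using path_unique[OF xs(1,2) ys(1,2)] xs ys assms V by simp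
  thus ?thesis using xs ys by simp
qed

lemma parent_exists: assumes "z \<in> V" "u \<in> V" "u \<noteq> z"
  shows "\<exists>w. {w, u} \<in> E \<and> d z w + 1 = d z u"
proof -
  obtain xs where xs: "vwalk E xs" "distinct xs" "hd xs = z" "last xs = u" using path_exists assms by blast
  have ne: "xs \<noteq> []" using xs by auto
  then obtain ys where ys: "xs = ys @ [u]" using xs by (metis append_butlast_last_id)
  have "ys \<noteq> []" using ys xs assms by auto
  then obtain as w where asw: "ys = as @ [w]" by (metis append_butlast_last_id)
  have "vwalk E (as @ [w] @ [u])" using xs ys asw by simp
  hence e: "{w, u} \<in> E" using vwalk_append[of "as @ [w]" "[u]" E] by simp
  have "d z w = length as" using dist_along_path(1)[of as w "[u]"] xs ys asw assms by simp
  moreover have "d z u = length as + 1" using dist_along_path(1)[of "as @ [w]" u "[]"] xs ys asw assms by simp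
  ultimately show ?thesis using e by auto
qed

lemma dist_through_nearest_last:
  assumes w: "vwalk E xs" and di: "distinct xs" and h: "hd xs \<in> V" and z: "z \<in> V"
    and m: "m \<in> set xs" and mn: "\<forall>w\<in>set xs. d z m \<le> d z w"
  shows "d z (last xs) = d z m + d m (last xs)"
proof -
  obtain as bs where xsd: "xs = as @ m # bs" using m by (meson split_list)
  have mV: "m \<in> V" using vwalk_in_V[OF w h] m by auto
  have dml: "d m (last xs) = length bs" using dist_along_path(2)[of as m bs] w di h xsd by simp
  show ?thesis
  proof (cases bs)
    case Nil thus ?thesis using xsd mV by simp
  next
    case (Cons b bs')
    obtain Q where Q: "vwalk E Q" "distinct Q" "hd Q = z" "last Q = m" using path_exists z mV by blast
    have nQ: "Q \<noteq> []" using Q by auto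
    have dQ: "d z m = length Q - 1" using dist_path_length[OF Q(1,2)] Q z by simp
    have wmb: "vwalk E (m # bs)" using vwalk_appendD2[of E as "m # bs"] w xsd by simp
    hence wb: "vwalk E bs" and eb: "{m, b} \<in> E" using Cons by auto
    have wQb: "vwalk E (Q @ bs)" using vwalk_append[of Q bs E] nQ Cons Q wb eb by simp
    have disj: "set Q \<inter> set bs = {}"
    proof (rule ccontr)
      assume "set Q \<inter> set bs \<noteq> {}"
      then obtain v where v: "v \<in> set Q" "v \<in> set bs" by blast
      have vm: "v \<noteq> m" using di xsd v by auto
      obtain q1 q2 where Qd: "Q = q1 @ v # q2" using v by (meson split_list)
      have "q2 \<noteq> []" using Qd Q vm by auto
      hence "length q1 < d z m" using dQ Qd by simp
      moreover have "d z v = length q1" using dist_along_path(1)[of q1 v q2] Q Qd z by simp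
      moreover have "v \<in> set xs" using v xsd by simp
      ultimately show False using mn by fastforce
    qed
    have dQb: "distinct (Q @ bs)" using Q(2) disj di xsd by auto
    have "d (hd (Q @ bs)) (last (Q @ bs)) = length (Q @ bs) - 1" using dist_path_length[OF wQb dQb] nQ Q z by simp
    hence "d z (last xs) = length Q + length bs - 1" using nQ Q xsd Cons by simp
    thus ?thesis using dQ dml nQ by (cases Q) auto
  qed
qed

lemma dist_through_nearest:
  assumes w: "vwalk E xs" and di: "distinct xs" and h: "hd xs \<in> V" and z: "z \<in> V"
    and m: "m \<in> set xs" and mn: "\<forall>w\<in>set xs. d z m \<le> d z w"
  shows "d z (last xs) = d z m + d m (last xs)" "d z (hd xs) = d z m + d m (hd xs)"
proof -
  show "d z (last xs) = d z m + d m (last xs)" using dist_through_nearest_last assms by blast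
  have ne: "xs \<noteq> []" using w by auto
  have sV: "set xs \<subseteq> V" using vwalk_in_V[OF w h] .
  have "distinct (rev xs)" "hd (rev xs) \<in> V" "m \<in> set (rev xs)" "\<forall>w\<in>set (rev xs). d z m \<le> d z w"
    using di sV ne m mn by (auto simp: hd_rev)
  hence "d z (last (rev xs)) = d z m + d m (last (rev xs))"
    using dist_through_nearest_last[OF vwalk_rev[OF w]] z by blast
  thus "d z (hd xs) = d z m + d m (hd xs)" using ne by (simp add: last_rev)
qed

lemma nearest_on_path:
  assumes "xs \<noteq> []" shows "\<exists>m\<in>set xs. \<forall>w\<in>set xs. d z m \<le> d z w"
proof -
  have "finite (set xs)" "set xs \<noteq> {}" using assms by auto
  thus ?thesis using ex_min_if_finite[of "d z ` set xs"] by (metis (no_types, lifting) arg_min_if_finite(1,2) not_less)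
qed

lemma dist_path_nth:
  assumes w: "vwalk E xs" and di: "distinct xs" and h: "hd xs \<in> V" and ij: "i \<le> j" "j < length xs"
  shows "d (xs ! i) (xs ! j) = j - i"
proof -
  define ys where "ys = drop i (take (Suc j) xs)"
  have dec: "xs = take i xs @ ys @ drop (Suc j) xs"
    unfolding ys_def using ij by (metis append.assoc append_take_drop_id min.absorb1 take_take le_SucI)
  have len: "length ys = Suc j - i" unfolding ys_def using ij by simp
  hence ne: "ys \<noteq> []" using ij by auto
  have wy: "vwalk E ys" using vwalk_infixD[of E "take i xs" ys "drop (Suc j) xs"] dec w ne by simp
  have dy: "distinct ys" unfolding ys_def using di by simp
  have hy: "hd ys = xs ! i" unfolding ys_def using ij by (simp add: hd_drop_conv_nth)
  have ly: "last ys = xs ! j" unfolding ys_def using ij ne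
    by (simp add: last_conv_nth)
  have "set xs \<subseteq> V" using vwalk_in_V[OF w h] .
  hence "hd ys \<in> V" using hy ij by auto
  thus ?thesis using dist_path_length[OF wy dy] hy ly len by simp
qed

lemma farthest_vertex_is_leaf:
  assumes r: "\<rho> \<in> V" "l \<in> V" "l \<noteq> \<rho>" and mx: "\<forall>u\<in>V. d \<rho> u \<le> d \<rho> l"
  shows "\<exists>p. {p, l} \<in> E \<and> (\<forall>w. {w, l} \<in> E \<longrightarrow> w = p)"
proof -
  obtain p where p: "{p, l} \<in> E" "d \<rho> p + 1 = d \<rho> l" using parent_exists[OF r(1,2)] r(3) by blast
  have "w = p" if w: "{w, l} \<in> E" for w
  proof -
    have "w \<in> V" using edge_endpoints[OF w] by simp
    hence "d \<rho> l = d \<rho> w + 1" using dist_adjacent[OF w r(1)] mx by force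
    thus ?thesis using parent_unique[OF w p(1) _ p(2) r(1)] by simp
  qed
  thus ?thesis using p by blast
qed

lemma edge_subset_V: "f \<in> E \<Longrightarrow> f \<subseteq> V"
  using edgeD by blast

lemma dist_within_edge: assumes "f \<in> E" "a \<in> f" "b \<in> f" shows "d a b \<le> 1"
proof -
  obtain u v where f: "f = {u, v}" "u \<in> V" "v \<in> V" "u \<noteq> v" using edgeD assms by blast
  have "d u v = 1" "d v u = 1" using dist_edge assms f by (auto simp: insert_commute)
  thus "d a b \<le> 1" using assms f by auto
qed

lemma ewalk_along_path:
  "vwalk E ps \<Longrightarrow> f \<in> E \<Longrightarrow> hd ps \<in> f \<Longrightarrow> g \<in> E \<Longrightarrow> last ps \<in> g \<Longrightarrow>
    \<exists>es. ewalk E es \<and> hd es = f \<and> last es = g \<and> length es = length ps + 1"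
proof (induction ps arbitrary: f)
  case Nil thus ?case by simp
next
  case (Cons x zs)
  show ?case
  proof (cases zs)
    case Nil
    have "ewalk E [f, g]" using Cons.prems Nil by auto
    thus ?thesis using Nil by (intro exI[of _ "[f, g]"]) auto
  next
    case (Cons y ys)
    have e: "{x, y} \<in> E" "vwalk E zs" using Cons.prems(1) Cons by auto
    obtain es where es: "ewalk E es" "hd es = {x, y}" "last es = g" "length es = length zs + 1"
      using Cons.IH[OF e(2) e(1)] Cons.prems Cons by auto
    have ne: "es \<noteq> []" using es by auto
    then obtain e' es' where es': "es = e' # es'" by (cases es) auto
    have "ewalk E (f # es)" using es es' Cons.prems by auto
    thus ?thesis using es ne Cons by (intro exI[of _ "f # es"]) (auto simp: es')
  qed
qed

lemma ewalk_ends_dist: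
  "ewalk E es \<Longrightarrow> 2 \<le> length es \<Longrightarrow> \<exists>x\<in>hd es. \<exists>y\<in>last es. d x y + 2 \<le> length es"
proof (induction es)
  case Nil thus ?case by simp
next
  case (Cons e es)
  then obtain f es'' where es: "es = f # es''" by (cases es) auto
  have h: "e \<in> E" "e \<inter> f \<noteq> {}" "ewalk E (f # es'')" using Cons.prems es by auto
  obtain w where w: "w \<in> e" "w \<in> f" using h by blast
  have wV: "w \<in> V" using edge_subset_V h w by blast
  show ?case
  proof (cases es'')
    case Nil
    have "d w w = 0" using wV by simp
    thus ?thesis using w es Nil by force
  next
    case (Cons g gs)
    obtain x y where xy: "x \<in> f" "y \<in> last es" "d x y + 2 \<le> length es"
      using Cons.IH h es Cons by auto
    have "f \<in> E" "last es \<in> E" using h(3) es unfolding ewalk_def by auto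
    hence V: "x \<in> V" "y \<in> V" using edge_subset_V xy(1,2) by blast+
    have "d w y \<le> d w x + d x y" using dist_triangle wV V by blast
    moreover have "d w x \<le> 1" using dist_within_edge \<open>f \<in> E\<close> w xy by blast
    ultimately show ?thesis using xy w es Cons by (intro bexI[of _ w] bexI[of _ y]) auto
  qed
qed

lemma edist_less_iff:
  assumes fg: "f \<in> E" "g \<in> E" "f \<noteq> g"
  shows "edist E f g < s \<longleftrightarrow> (\<exists>x\<in>f. \<exists>y\<in>g. d x y + 2 \<le> s)"
proof -
  define P where "P = (\<lambda>n. \<exists>es. ewalk E es \<and> hd es = f \<and> last es = g \<and> length es = Suc n)"
  have ed: "edist E f g = Least P" unfolding edist_def P_def by simp
  have Pxy: "P (d x y + 1)" if "x \<in> f" "y \<in> g" for x y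
  proof -
    have V: "x \<in> V" "y \<in> V" using edge_subset_V fg that by blast+
    obtain ps where ps: "vwalk E ps" "distinct ps" "hd ps = x" "last ps = y" using path_exists V by blast
    have "d x y = length ps - 1" using dist_path_length[OF ps(1,2)] ps V by simp
    moreover have "ps \<noteq> []" using ps by auto
    ultimately show ?thesis using ewalk_along_path[OF ps(1) fg(1) _ fg(2)] ps that unfolding P_def by auto
  qed
  show ?thesis
  proof
    assume a: "edist E f g < s"
    obtain x y where "x \<in> f" "y \<in> g" using edgeD fg by blast
    hence "P (Least P)" using Pxy by (blast intro: LeastI)
    then obtain es where es: "ewalk E es" "hd es = f" "last es = g" "length es = Suc (Least P)"
      unfolding P_def by blast
    have "length es \<noteq> 1" using es fg by (cases es) auto
    hence "2 \<le> length es" using es by simp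
    then obtain x y where "x \<in> f" "y \<in> g" "d x y + 2 \<le> length es" using ewalk_ends_dist es by blast
    moreover have "length es \<le> s" using a ed es by simp
    ultimately show "\<exists>x\<in>f. \<exists>y\<in>g. d x y + 2 \<le> s" by (meson le_trans)
  next
    assume "\<exists>x\<in>f. \<exists>y\<in>g. d x y + 2 \<le> s"
    then obtain x y where xy: "x \<in> f" "y \<in> g" "d x y + 2 \<le> s" by blast
    have "Least P \<le> d x y + 1" using Pxy[OF xy(1,2)] by (rule Least_le)
    thus "edist E f g < s" using ed xy by simp
  qed
qed

definition parent :: "'a \<Rightarrow> 'a \<Rightarrow> 'a" where
  "parent z u = (SOME w. {w, u} \<in> E \<and> d z w + 1 = d z u)"

lemma parent_edge_dist:
  assumes "z \<in> V" "u \<in> V" "u \<noteq> z"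
  shows "{parent z u, u} \<in> E" "d z (parent z u) + 1 = d z u"
  using someI_ex[OF parent_exists[OF assms]] unfolding parent_def by auto

lemma parent_eqI:
  assumes "{w, u} \<in> E" "d z w + 1 = d z u" "z \<in> V"
  shows "parent z u = w"
proof -
  have "u \<in> V" "u \<noteq> z" using assms edge_endpoints[OF assms(1)] by auto
  thus ?thesis using parent_unique[OF parent_edge_dist(1) assms(1) parent_edge_dist(2) assms(2,3)] assms(3) by blast
qed

lemma finite_E: "finite E"
proof (rule finite_subset[OF _ finite_Pow_iff[THEN iffD2, OF finite_V]])
  show "E \<subseteq> Pow V" using edgeD by blast
qed

lemma parent_eq_second_on_path:
  assumes xs: "vwalk E xs" "distinct xs" "hd xs \<in> V" and z: "z \<in> V"
    and m: "m \<in> set xs" "\<forall>w\<in>set xs. d z m \<le> d z w" and "hd xs \<noteq> m"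
  shows "parent z (hd xs) = xs ! 1"
proof -
  obtain i where i: "i < length xs" "xs ! i = m" using m(1) by (meson in_set_conv_nth)
  have "xs \<noteq> []" using xs by auto
  hence hd_eq: "hd xs = xs ! 0" by (simp add: hd_conv_nth)
  hence "0 < i" using i \<open>hd xs \<noteq> m\<close> by (cases i) auto
  have sV: "set xs \<subseteq> V" using vwalk_in_V[OF xs(1,3)] .
  have V: "m \<in> V" "xs ! 1 \<in> V" using sV m(1) i \<open>0 < i\<close> by auto
  have edge: "{xs ! 1, hd xs} \<in> E"
    using xs(1) i \<open>0 < i\<close> hd_eq unfolding vwalk_def by (auto simp: insert_commute)
  have "d m (hd xs) = i"
    using dist_path_nth[OF xs, of 0 i] dist_sym[OF xs(3) V(1)] i hd_eq by simp
  hence "d z (hd xs) = d z m + i" using dist_through_nearest(2)[OF xs z m] by simp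
  moreover have "d m (xs ! 1) = i - 1"
    using dist_path_nth[OF xs, of 1 i] dist_sym[OF V(2,1)] i \<open>0 < i\<close> by simp
  hence "d z (xs ! 1) \<le> d z m + (i - 1)" using dist_triangle[OF z V] by simp
  moreover have "d z (hd xs) \<le> d z (xs ! 1) + 1"
    using dist_triangle[OF z V(2) xs(3)] dist_edge[OF edge] by simp
  ultimately have "d z (xs ! 1) + 1 = d z (hd xs)" using \<open>0 < i\<close> by linarith
  thus ?thesis using parent_eqI[OF edge _ z] by simp
qed


lemma dist_parents_of_path_ends:
  assumes xs: "vwalk E xs" "distinct xs" "hd xs \<in> V" and z: "z \<in> V"
    and m: "m \<in> set xs" "\<forall>w\<in>set xs. d z m \<le> d z w" "hd xs \<noteq> m" "last xs \<noteq> m"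
  shows "d (parent z (hd xs)) (parent z (last xs)) + 2 = d (hd xs) (last xs)"
proof -
  have ne: "xs \<noteq> []" using xs by auto
  have "3 \<le> length xs"
  proof -
    obtain i where i: "i < length xs" "xs ! i = m" using m(1) by (meson in_set_conv_nth)
    have "i \<noteq> 0" using i m(3) ne by (metis hd_conv_nth)
    moreover have "i \<noteq> length xs - 1" using i m(4) ne by (metis last_conv_nth)
    ultimately show ?thesis using i(1) by linarith
  qed
  have "parent z (hd xs) = xs ! 1" using parent_eq_second_on_path[OF xs z m(1,2,3)] .
  moreover have rev_xs: "vwalk E (rev xs)" "distinct (rev xs)" "hd (rev xs) \<in> V"
    using vwalk_rev[OF xs(1)] vwalk_in_V[OF xs(1,3)] xs(2) ne by (auto simp: hd_rev)
  hence "parent z (last xs) = rev xs ! 1"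
    using parent_eq_second_on_path[OF rev_xs z, of m] m ne by (simp add: hd_rev)
  moreover have "rev xs ! 1 = xs ! (length xs - 2)"
    using \<open>3 \<le> length xs\<close> by (simp add: rev_nth numeral_2_eq_2)
  moreover have "d (xs ! 1) (xs ! (length xs - 2)) = length xs - 3"
    using dist_path_nth[OF xs, of 1 "length xs - 2"] \<open>3 \<le> length xs\<close> by simp
  moreover have "d (hd xs) (last xs) = length xs - 1" using dist_path_length[OF xs] .
  ultimately show ?thesis using \<open>3 \<le> length xs\<close> by simp
qed
end

section \<open>Removing a farthest leaf\<close>

locale far_leaf = tree_graph +
  fixes \<rho> l p :: 'a
  assumes root: "\<rho> \<in> V" and leaf: "l \<in> V" and farthest: "\<forall>u\<in>V. d \<rho> u \<le> d \<rho> l"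
    and leaf_edge: "{p, l} \<in> E" and leaf_degree: "\<forall>w. {w, l} \<in> E \<longrightarrow> w = p"
begin

lemma p_in_V: "p \<in> V" and p_neq_l: "p \<noteq> l"
  using edge_endpoints[OF leaf_edge] by auto

lemma edge_at_leaf: assumes "f \<in> E" "l \<in> f" shows "f = {p, l}"
proof -
  obtain u v where f: "f = {u, v}" using edgeD assms(1) by blast
  hence "{u, l} \<in> E \<and> v = l \<or> {v, l} \<in> E \<and> u = l"
    using assms by (auto simp: insert_commute)
  thus ?thesis using f leaf_degree by (auto simp: insert_commute)
qed

lemma dist_from_leaf: assumes "y \<in> V" "y \<noteq> l" shows "d l y = d p y + 1"
proof -
  obtain w where w: "{w, l} \<in> E" "d y w + 1 = d y l"
    using parent_exists[OF assms(1) leaf] assms(2) by auto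
  hence "w = p" using leaf_degree by blast
  moreover have "d y p = d p y" "d y l = d l y" using dist_sym assms(1) leaf p_in_V by auto
  ultimately show ?thesis using w(2) by simp
qed

lemma path_avoids_leaf:
  assumes xs: "vwalk E xs" "distinct xs" "hd xs \<noteq> l" "last xs \<noteq> l"
  shows "l \<notin> set xs"
proof
  assume "l \<in> set xs"
  then obtain as bs where xs_eq: "xs = as @ l # bs" by (meson split_list)
  obtain as' a where "as = as' @ [a]" using xs_eq xs(3) by (cases as rule: rev_cases) auto
  moreover obtain b bs' where "bs = b # bs'" using xs_eq xs(4) by (cases bs) auto
  ultimately have "vwalk E [a, l]" "vwalk E [l, b]" "a \<noteq> b"
    using vwalk_infixD[of E as' "[a, l]" "b # bs'"] vwalk_infixD[of E "as' @ [a]" "[l, b]" bs']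
      xs(1,2) xs_eq by auto
  thus False using leaf_degree by (simp add: insert_commute) blast
qed

lemma vwalk_remove_leaf:
  assumes "vwalk E xs" "l \<notin> set xs" shows "vwalk (E - {{p, l}}) xs"
proof -
  have "{xs ! i, xs ! Suc i} \<noteq> {p, l}" if "Suc i < length xs" for i
    using assms(2) that nth_mem[of i xs] nth_mem[of "Suc i" xs] by (auto simp: doubleton_eq_iff)
  thus ?thesis using assms(1) unfolding vwalk_def by blast
qed

lemma path_remove_leaf:
  assumes "u \<in> V - {l}" "v \<in> V - {l}"
  obtains xs where "vwalk E xs" "vwalk (E - {{p, l}}) xs" "distinct xs" "hd xs = u" "last xs = v"
proof -
  obtain xs where xs: "vwalk E xs" "distinct xs" "hd xs = u" "last xs = v"
    using path_exists assms by blast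
  have "l \<notin> set xs" using path_avoids_leaf[OF xs(1,2)] xs(3,4) assms by auto
  thus ?thesis using that[OF xs(1) vwalk_remove_leaf[OF xs(1)] xs(2-4)] by blast
qed

lemma tree_remove_leaf: "tree (V - {l}) (E - {{p, l}})"
  unfolding tree_def
proof (intro conjI ballI)
  show "finite (V - {l})" using finite_V by simp
  show "V - {l} \<noteq> {}" using p_in_V p_neq_l by blast
  show "E - {{p, l}} \<subseteq> {{u, v} |u v. u \<in> V - {l} \<and> v \<in> V - {l} \<and> u \<noteq> v}"
  proof
    fix f assume f: "f \<in> E - {{p, l}}"
    obtain u v where "f = {u, v}" "u \<in> V" "v \<in> V" "u \<noteq> v" using edgeD f by blast
    moreover have "l \<notin> f" using edge_at_leaf f by blast
    ultimately show "f \<in> {{u, v} |u v. u \<in> V - {l} \<and> v \<in> V - {l} \<and> u \<noteq> v}" by blast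
  qed
  fix u v assume uv: "u \<in> V - {l}" "v \<in> V - {l}"
  obtain xs where xs: "vwalk E xs" "vwalk (E - {{p, l}}) xs" "distinct xs" "hd xs = u" "last xs = v"
    using path_remove_leaf uv by blast
  show "\<exists>!xs. vwalk (E - {{p, l}}) xs \<and> distinct xs \<and> hd xs = u \<and> last xs = v"
  proof (rule ex1I[of _ xs])
    show "vwalk (E - {{p, l}}) xs \<and> distinct xs \<and> hd xs = u \<and> last xs = v" using xs by simp
    fix ys assume ys: "vwalk (E - {{p, l}}) ys \<and> distinct ys \<and> hd ys = u \<and> last ys = v"
    have "vwalk E ys" using ys vwalk_mono by blast
    moreover have "distinct ys" "hd ys = hd xs" "last ys = last xs" "hd ys \<in> V" "last ys \<in> V"
      using ys xs uv by auto
    ultimately show "ys = xs" using path_unique[OF _ _ xs(1,3)] by blast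
  qed
qed

lemma dist_remove_leaf:
  assumes "u \<in> V - {l}" "v \<in> V - {l}" shows "vdist (E - {{p, l}}) u v = d u v"
proof -
  interpret pruned: tree_graph "V - {l}" "E - {{p, l}}" using tree_remove_leaf by unfold_locales
  obtain xs where xs: "vwalk E xs" "vwalk (E - {{p, l}}) xs" "distinct xs" "hd xs = u" "last xs = v"
    using path_remove_leaf assms by blast
  thus ?thesis
    using pruned.dist_path_length[OF xs(2,3)] dist_path_length[OF xs(1,3)] assms by simp
qed

end

section \<open>Conflict relations\<close>

text \<open>The (s + 1)-scattered vertex sets are the stable sets of vconflict E s and, by
  edist_less_iff, the s-scattered edge sets are the stable sets of econflict E s.\<close>

definition vconflict :: "'a set set \<Rightarrow> nat \<Rightarrow> 'a \<Rightarrow> 'a \<Rightarrow> bool" where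
  "vconflict E s u v \<longleftrightarrow> vdist E u v \<le> s"

definition econflict :: "'a set set \<Rightarrow> nat \<Rightarrow> 'a set \<Rightarrow> 'a set \<Rightarrow> bool" where
  "econflict E s f g \<longleftrightarrow> (\<exists>x\<in>f. \<exists>y\<in>g. vdist E x y + 2 \<le> s)"

lemma vscattered_iff_stable_set: "vscattered E (s + 1) X \<longleftrightarrow> stable_set (vconflict E s) X"
  unfolding vscattered_def stable_set_def vconflict_def by (simp add: not_le Suc_le_eq)

context tree_graph begin

lemma far_leaf_exists:
  assumes "\<nexists>v. V = {v}"
  obtains \<rho> l p where "far_leaf V E \<rho> l p"
proof -
  obtain \<rho> where \<rho>: "\<rho> \<in> V" using V_nonempty by blast
  have "Max (d \<rho> ` V) \<in> d \<rho> ` V" using finite_V V_nonempty by simp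
  then obtain l where l: "l \<in> V" "d \<rho> l = Max (d \<rho> ` V)" by auto
  have farthest: "\<forall>u\<in>V. d \<rho> u \<le> d \<rho> l" using l finite_V by simp
  have "V \<noteq> {\<rho>}" using assms by blast
  then obtain y where y: "y \<in> V" "y \<noteq> \<rho>" using \<rho> by blast
  have "d \<rho> y \<noteq> 0" using dist_eq_0D[OF \<rho> y(1)] y(2) by auto
  moreover have "d \<rho> y \<le> d \<rho> l" using farthest y(1) by blast
  ultimately have "d \<rho> l \<noteq> 0" by linarith
  hence "l \<noteq> \<rho>" using \<rho> by auto
  then obtain p where "{p, l} \<in> E" "\<forall>w. {w, l} \<in> E \<longrightarrow> w = p"
    using farthest_vertex_is_leaf[OF \<rho> l(1) _ farthest] by blast
  hence "far_leaf V E \<rho> l p"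
    using \<rho> l(1) farthest by (intro far_leaf.intro far_leaf_axioms.intro tree_graph_axioms)
  thus ?thesis by (rule that)
qed

lemma escattered_iff_stable_set:
  assumes "Y \<subseteq> E" shows "escattered E s Y \<longleftrightarrow> stable_set (econflict E s) Y"
proof -
  have "s \<le> edist E f g \<longleftrightarrow> \<not> econflict E s f g" if "f \<in> Y" "g \<in> Y" "f \<noteq> g" for f g
  proof -
    have "f \<in> E" "g \<in> E" using that assms by auto
    thus ?thesis using edist_less_iff[of f g s] that(3) unfolding econflict_def by linarith
  qed
  thus ?thesis unfolding escattered_def stable_set_def by blast
qed

lemma symp_on_vconflict: "symp_on V (vconflict E s)"
  by (rule symp_onI) (simp add: vconflict_def dist_sym)

lemma symp_on_econflict: "symp_on E (econflict E s)"
proof (rule symp_onI)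
  fix f g assume "f \<in> E" "g \<in> E" "econflict E s f g"
  then obtain x y where xy: "x \<in> f" "y \<in> g" "d x y + 2 \<le> s"
    unfolding econflict_def by blast
  hence "d y x + 2 \<le> s" using dist_sym edge_subset_V \<open>f \<in> E\<close> \<open>g \<in> E\<close> by (metis subsetD)
  thus "econflict E s g f" unfolding econflict_def using xy by blast
qed

end

context far_leaf begin

text \<open>As l is farthest from \<rho>, every vertex x meets the path from l to \<rho> at a point at least as
  far from l as from x.\<close>
lemma near_point_on_root_path:
  assumes xs: "vwalk E xs" "distinct xs" "hd xs = l" "last xs = \<rho>" and x: "x \<in> V"
  obtains i where "i < length xs" "d x l = d x (xs ! i) + i" "d x (xs ! i) \<le> i"
proof -
  have ne: "xs \<noteq> []" using xs by auto
  have sV: "set xs \<subseteq> V" using vwalk_in_V xs leaf by blast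
  define L where "L = length xs - 1"
  have hd_nth: "xs ! 0 = l" using xs ne by (simp add: hd_conv_nth)
  have last_nth: "xs ! L = \<rho>" unfolding L_def using xs ne by (simp add: last_conv_nth)
  have "d l \<rho> = L" using dist_path_nth[OF xs(1,2), of 0 L] xs leaf hd_nth last_nth ne
    unfolding L_def by simp
  obtain m where m: "m \<in> set xs" "\<forall>w\<in>set xs. d x m \<le> d x w" using nearest_on_path ne by blast
  have through_m: "d x \<rho> = d x m + d m \<rho>" "d x l = d x m + d m l"
    using dist_through_nearest[OF xs(1,2) _ x m] xs leaf by auto
  obtain i where i: "i < length xs" "xs ! i = m" using m(1) by (meson in_set_conv_nth)
  have "m \<in> V" using sV m by auto
  have "d m l = i"
    using dist_path_nth[OF xs(1,2), of 0 i] xs leaf hd_nth i dist_sym[OF \<open>m \<in> V\<close> leaf] by simp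
  moreover have "d m \<rho> = L - i"
    using dist_path_nth[OF xs(1,2), of i L] xs leaf last_nth i unfolding L_def by simp
  moreover have "d x \<rho> \<le> d l \<rho>"
    using farthest x dist_sym[OF x root] dist_sym[OF leaf root] by simp
  ultimately have "d x m \<le> i" using through_m \<open>d l \<rho> = L\<close> i unfolding L_def by simp
  thus ?thesis using that through_m \<open>d m l = i\<close> i by simp
qed

lemma dist_le_if_near_leaf:
  assumes uv: "u \<in> V" "v \<in> V" "d l u \<le> s" "d l v \<le> s"
  shows "d u v \<le> s"
proof -
  obtain xs where xs: "vwalk E xs" "distinct xs" "hd xs = l" "last xs = \<rho>"
    using path_exists leaf root by blast
  obtain i where i: "i < length xs" "d u l = d u (xs ! i) + i" "d u (xs ! i) \<le> i"
    using near_point_on_root_path[OF xs uv(1)] .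
  obtain j where j: "j < length xs" "d v l = d v (xs ! j) + j" "d v (xs ! j) \<le> j"
    using near_point_on_root_path[OF xs uv(2)] .
  have sV: "set xs \<subseteq> V" using vwalk_in_V xs leaf by blast
  hence V: "xs ! i \<in> V" "xs ! j \<in> V" using i j by auto
  have "d u v \<le> d u (xs ! i) + d (xs ! i) (xs ! j) + d v (xs ! j)"
    using dist_triangle[OF uv(1) V(1) uv(2)] dist_triangle[OF V uv(2)] dist_sym[OF V(2) uv(2)]
    by simp
  moreover have "d (xs ! i) (xs ! j) = (if i \<le> j then j - i else i - j)"
    using dist_path_nth[OF xs(1,2), of i j] dist_path_nth[OF xs(1,2), of j i] dist_sym[OF V]
      xs(3) leaf i(1) j(1) by auto
  moreover have "d u l \<le> s" "d v l \<le> s" using uv dist_sym leaf by auto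
  ultimately show ?thesis using i j by (auto split: if_splits)
qed

lemma clique_vconflict_near_leaf: "clique (vconflict E s) {u \<in> V - {l}. vconflict E s l u}"
  unfolding clique_def vconflict_def using dist_le_if_near_leaf by auto

lemma econflict_leaf_edge_iff:
  assumes "f \<in> E - {{p, l}}"
  shows "econflict E s {p, l} f \<longleftrightarrow> (\<exists>y\<in>f. d l y + 1 \<le> s)"
proof -
  have "y \<in> V" "y \<noteq> l" if "y \<in> f" for y
    using edge_at_leaf edge_subset_V assms that by blast+
  hence dist_l: "d l y = d p y + 1" if "y \<in> f" for y using dist_from_leaf that by blast
  show ?thesis unfolding econflict_def
  proof
    assume "\<exists>x\<in>{p, l}. \<exists>y\<in>f. d x y + 2 \<le> s"
    then obtain x y where "x \<in> {p, l}" "y \<in> f" "d x y + 2 \<le> s" by blast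
    hence "d l y + 1 \<le> s" using dist_l[OF \<open>y \<in> f\<close>] by auto
    thus "\<exists>y\<in>f. d l y + 1 \<le> s" using \<open>y \<in> f\<close> by blast
  next
    assume "\<exists>y\<in>f. d l y + 1 \<le> s"
    then obtain y where "y \<in> f" "d l y + 1 \<le> s" by blast
    thus "\<exists>x\<in>{p, l}. \<exists>y\<in>f. d x y + 2 \<le> s" using dist_l[OF \<open>y \<in> f\<close>] by auto
  qed
qed

lemma dist_leaf_neighbour: "d l p = 1"
  using dist_edge[OF leaf_edge] dist_sym[OF p_in_V leaf] by simp

lemma two_le_dist_from_leaf: "u \<in> V \<Longrightarrow> u \<notin> {l, p} \<Longrightarrow> 2 \<le> d l u"
  using dist_from_leaf[of u] dist_eq_0D[OF p_in_V, of u] by fastforce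

lemma inj_on_parent_edge: "inj_on (\<lambda>u. {parent l u, u}) (V - {l})"
proof (rule inj_onI)
  fix u v assume uv: "u \<in> V - {l}" "v \<in> V - {l}" "{parent l u, u} = {parent l v, v}"
  show "u = v"
  proof (rule ccontr)
    assume "u \<noteq> v"
    hence "u = parent l v" "v = parent l u" using uv(3) by (auto simp: doubleton_eq_iff)
    moreover have "d l (parent l v) + 1 = d l v" "d l (parent l u) + 1 = d l u"
      using parent_edge_dist(2)[OF leaf] uv(1,2) by auto
    ultimately show False by simp
  qed
qed

lemma near_leaf_edges_eq_parent_edges:
  "{f \<in> E - {{p, l}}. econflict E s {p, l} f} = (\<lambda>u. {parent l u, u}) ` {u \<in> V - {l, p}. d l u \<le> s}"
    (is "?NE = ?edge ` ?U")
proof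
  show "?edge ` ?U \<subseteq> ?NE"
  proof
    fix f assume "f \<in> ?edge ` ?U"
    then obtain u where u: "u \<in> V" "u \<notin> {l, p}" "d l u \<le> s" and f: "f = {parent l u, u}" by auto
    have edge: "f \<in> E - {{p, l}}"
      using parent_edge_dist(1)[OF leaf u(1)] u(2) f by (auto simp: doubleton_eq_iff)
    moreover have "d l (parent l u) + 1 \<le> s" using parent_edge_dist(2)[OF leaf u(1)] u(2,3) by simp
    ultimately show "f \<in> ?NE" using econflict_leaf_edge_iff[OF edge] f by auto
  qed
  have oriented: "f \<in> ?edge ` ?U"
    if f: "f = {a, b}" "f \<in> E - {{p, l}}" "econflict E s {p, l} f" and ab: "d l b = d l a + 1"
    for f a b
  proof -
    have "a \<in> V" "b \<in> V" "a \<noteq> l" "b \<noteq> l"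
      using f edge_endpoints[of a b] edge_at_leaf[of f] by auto
    have "d l a \<noteq> 0" using dist_eq_0D[OF leaf \<open>a \<in> V\<close>] \<open>a \<noteq> l\<close> by auto
    hence "b \<noteq> p" using ab dist_leaf_neighbour by auto
    moreover have "d l b \<le> s" using econflict_leaf_edge_iff[OF f(2)] f(1,3) ab by auto
    moreover have "parent l b = a" using parent_eqI[of a b l] f ab leaf by simp
    ultimately show ?thesis using f(1) \<open>b \<in> V\<close> \<open>b \<noteq> l\<close> by blast
  qed
  show "?NE \<subseteq> ?edge ` ?U"
  proof
    fix f assume f: "f \<in> ?NE"
    obtain a b where ab: "f = {a, b}" using edgeD f by blast
    hence "d l b = d l a + 1 \<or> d l a = d l b + 1" using dist_adjacent f leaf by blast
    thus "f \<in> ?edge ` ?U" using oriented[of f a b] oriented[of f b a] ab f by (auto simp: insert_commute)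
  qed
qed

lemma card_near_leaf_edges:
  assumes "1 \<le> s"
  shows "card {f \<in> E - {{p, l}}. econflict E s {p, l} f} + 1 = card {u \<in> V - {l}. vconflict E s l u}"
proof -
  let ?NV = "{u \<in> V - {l}. vconflict E s l u}"
  have U: "{u \<in> V - {l, p}. d l u \<le> s} = ?NV - {p}" unfolding vconflict_def by auto
  have "p \<in> ?NV" using p_in_V p_neq_l dist_leaf_neighbour assms unfolding vconflict_def by simp
  moreover have "finite ?NV" using finite_V by simp
  ultimately have "Suc (card (?NV - {p})) = card ?NV" by (rule card_Suc_Diff1[rotated])
  moreover have "inj_on (\<lambda>u. {parent l u, u}) (?NV - {p})"
    using inj_on_parent_edge by (rule inj_on_subset) auto
  ultimately show ?thesis unfolding near_leaf_edges_eq_parent_edges U by (simp add: card_image)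
qed

lemma econflict_parent_edges:
  assumes u: "u \<in> V" "2 \<le> d l u" "d l u \<le> s" and v: "v \<in> V" "2 \<le> d l v" "d l v \<le> s"
    and "u \<noteq> v"
  shows "econflict E s {parent l u, u} {parent l v, v}"
proof -
  obtain xs where xs: "vwalk E xs" "distinct xs" "hd xs = u" "last xs = v"
    using path_exists u(1) v(1) by blast
  have ne: "xs \<noteq> []" using xs by auto
  obtain m where m: "m \<in> set xs" "\<forall>w\<in>set xs. d l m \<le> d l w" using nearest_on_path ne by blast
  have through_m: "d l v = d l m + d m v" "d l u = d l m + d m u"
    using dist_through_nearest[OF xs(1,2) _ leaf m] xs u(1) by auto
  consider "m = u" | "m = v" | "m \<noteq> u" "m \<noteq> v" by blast
  thus ?thesis
  proof cases
    case 1
    hence "d u v + 2 \<le> s" using through_m(1) u(2) v(3) by simp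
    thus ?thesis unfolding econflict_def by blast
  next
    case 2
    hence "d v u + 2 \<le> s" using through_m(2) v(2) u(3) by simp
    thus ?thesis unfolding econflict_def using dist_sym[OF u(1) v(1)] by auto
  next
    case 3
    hence "d (parent l u) (parent l v) + 2 = d u v"
      using dist_parents_of_path_ends[OF xs(1,2) _ leaf m] xs(3,4) u(1) by simp
    moreover have "d u v \<le> s" using dist_le_if_near_leaf u v by blast
    ultimately have "d (parent l u) (parent l v) + 2 \<le> s" by linarith
    thus ?thesis unfolding econflict_def by blast
  qed
qed

lemma clique_econflict_near_leaf_edge:
  "clique (econflict E s) {f \<in> E - {{p, l}}. econflict E s {p, l} f}"
  unfolding clique_def near_leaf_edges_eq_parent_edges
proof (intro ballI impI)
  fix f g assume "f \<in> (\<lambda>u. {parent l u, u}) ` {u \<in> V - {l, p}. d l u \<le> s}"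
    and "g \<in> (\<lambda>u. {parent l u, u}) ` {u \<in> V - {l, p}. d l u \<le> s}" and "f \<noteq> g"
  then obtain u v where u: "u \<in> V" "u \<notin> {l, p}" "d l u \<le> s" and v: "v \<in> V" "v \<notin> {l, p}" "d l v \<le> s"
    and fg: "f = {parent l u, u}" "g = {parent l v, v}" by auto
  have "u \<noteq> v" using fg \<open>f \<noteq> g\<close> by auto
  moreover have "2 \<le> d l u" "2 \<le> d l v" using two_le_dist_from_leaf u(1,2) v(1,2) by auto
  ultimately show "econflict E s f g"
    using econflict_parent_edges[OF u(1) _ u(3) v(1) _ v(3)] fg by simp
qed

lemma card_vertex_partitions_remove_leaf:
  "card (stable_partitions V (vconflict E s) (Suc k)) =
     card (stable_partitions (V - {l}) (vconflict (E - {{p, l}}) s) k)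
     + (Suc k - card {u \<in> V - {l}. vconflict E s l u})
       * card (stable_partitions (V - {l}) (vconflict (E - {{p, l}}) s) (Suc k))"
proof -
  have "card (stable_partitions (insert l (V - {l})) (vconflict E s) (Suc k)) =
     card (stable_partitions (V - {l}) (vconflict E s) k)
     + (Suc k - card {u \<in> V - {l}. vconflict E s l u})
       * card (stable_partitions (V - {l}) (vconflict E s) (Suc k))"
  proof (rule card_stable_partitions_insert)
    show "finite (V - {l})" "l \<notin> V - {l}" using finite_V by auto
    show "symp_on (insert l (V - {l})) (vconflict E s)"
      using symp_on_vconflict by (simp add: insert_absorb[OF leaf])
  qed (rule clique_vconflict_near_leaf)
  moreover have "stable_partitions (V - {l}) (vconflict E s) j =
      stable_partitions (V - {l}) (vconflict (E - {{p, l}}) s) j" for j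
    by (rule stable_partitions_cong) (simp add: vconflict_def dist_remove_leaf)
  ultimately show ?thesis by (simp only: insert_Diff[OF leaf])
qed

lemma card_edge_partitions_remove_leaf:
  "card (stable_partitions E (econflict E s) (Suc k)) =
     card (stable_partitions (E - {{p, l}}) (econflict (E - {{p, l}}) s) k)
     + (Suc k - card {f \<in> E - {{p, l}}. econflict E s {p, l} f})
       * card (stable_partitions (E - {{p, l}}) (econflict (E - {{p, l}}) s) (Suc k))"
proof -
  have "card (stable_partitions (insert {p, l} (E - {{p, l}})) (econflict E s) (Suc k)) =
     card (stable_partitions (E - {{p, l}}) (econflict E s) k)
     + (Suc k - card {f \<in> E - {{p, l}}. econflict E s {p, l} f})
       * card (stable_partitions (E - {{p, l}}) (econflict E s) (Suc k))"
  proof (rule card_stable_partitions_insert)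
    show "finite (E - {{p, l}})" "{p, l} \<notin> E - {{p, l}}" using finite_E by auto
    show "symp_on (insert {p, l} (E - {{p, l}})) (econflict E s)"
      using symp_on_econflict by (simp add: insert_absorb[OF leaf_edge])
  qed (rule clique_econflict_near_leaf_edge)
  moreover have "econflict E s f g = econflict (E - {{p, l}}) s f g"
    if "f \<in> E - {{p, l}}" "g \<in> E - {{p, l}}" for f g
  proof -
    have "f \<subseteq> V - {l}" "g \<subseteq> V - {l}" using that edge_at_leaf edge_subset_V by blast+
    thus ?thesis unfolding econflict_def using dist_remove_leaf by (metis subsetD)
  qed
  hence "stable_partitions (E - {{p, l}}) (econflict E s) j =
      stable_partitions (E - {{p, l}}) (econflict (E - {{p, l}}) s) j" for j
    by (rule stable_partitions_cong)
  ultimately show ?thesis by (simp only: insert_Diff[OF leaf_edge])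
qed

end

section \<open>Counting by leaf removal\<close>

lemma (in far_leaf) card_partitions_eq_if_pruned_eq:
  assumes "1 \<le> s"
    and pruned: "\<And>j. card (stable_partitions (V - {l}) (vconflict (E - {{p, l}}) s) (Suc j)) =
        card (stable_partitions (E - {{p, l}}) (econflict (E - {{p, l}}) s) j)"
  shows "card (stable_partitions V (vconflict E s) (Suc k)) = card (stable_partitions E (econflict E s) k)"
proof -
  let ?NE = "{f \<in> E - {{p, l}}. econflict E s {p, l} f}" and ?NV = "{u \<in> V - {l}. vconflict E s l u}"
  have near: "card ?NE + 1 = card ?NV" using card_near_leaf_edges[OF assms(1)] .
  show ?thesis
  proof (cases k)
    case 0
    have "V - {l} \<noteq> {}" using p_in_V p_neq_l by blast
    hence "stable_partitions (V - {l}) (vconflict (E - {{p, l}}) s) 0 = {}"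
      using finite_V by (simp add: stable_partitions_0)
    moreover have "stable_partitions E (econflict E s) 0 = {}"
      using stable_partitions_0 leaf_edge finite_E by blast
    ultimately show ?thesis using card_vertex_partitions_remove_leaf[where k = 0] near 0 by simp
  next
    case (Suc j)
    hence "Suc k - card ?NV = k - card ?NE" using near by simp
    thus ?thesis
      using card_vertex_partitions_remove_leaf[where k = k] card_edge_partitions_remove_leaf[where k = j]
        pruned Suc
      by simp
  qed
qed

lemma (in tree_graph) edges_empty_if_singleton: "V = {v} \<Longrightarrow> E = {}"
  using edgeD by blast

theorem card_vertex_partitions_eq_edge_partitions:
  assumes "tree V E" "1 \<le> s"
  shows "card (stable_partitions V (vconflict E s) (Suc k)) = card (stable_partitions E (econflict E s) k)"
  using assms(1)
proof (induction "card V" arbitrary: V E k rule: less_induct)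
  case less
  interpret tree_graph V E using less.prems by unfold_locales
  show ?case
  proof (cases "\<exists>v. V = {v}")
    case True
    then obtain v where "V = {v}" "E = {}" using edges_empty_if_singleton by blast
    thus ?thesis by (simp add: stable_partitions_singleton stable_partitions_empty)
  next
    case False
    then obtain \<rho> l p where "far_leaf V E \<rho> l p" using far_leaf_exists by blast
    then interpret far_leaf V E \<rho> l p .
    show ?thesis
    proof (rule card_partitions_eq_if_pruned_eq[OF assms(2)])
      show "card (stable_partitions (V - {l}) (vconflict (E - {{p, l}}) s) (Suc j)) =
          card (stable_partitions (E - {{p, l}}) (econflict (E - {{p, l}}) s) j)" for j
        using less.hyps[OF card_Diff1_less[OF finite_V leaf] tree_remove_leaf] .
    qed
  qed
qed

theorem corollary3p7:
  fixes V :: "'a set" and E :: "'a set set" and r s :: nat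
  assumes "tree V E" and "E \<noteq> {}" and "r \<ge> 1" and "s \<ge> 1"
  shows "\<exists>f. bij_betw f
     {P. partition_on V P \<and> card P = r + 1 \<and> (\<forall>X\<in>P. vscattered E (s + 1) X)}
     {Q. partition_on E Q \<and> card Q = r \<and> (\<forall>Y\<in>Q. escattered E s Y)}"
proof -
  interpret tree_graph V E using assms(1) by unfold_locales
  have "{P. partition_on V P \<and> card P = r + 1 \<and> (\<forall>X\<in>P. vscattered E (s + 1) X)}
      = stable_partitions V (vconflict E s) (Suc r)"
    unfolding stable_partitions_def vscattered_iff_stable_set by simp
  moreover have "{Q. partition_on E Q \<and> card Q = r \<and> (\<forall>Y\<in>Q. escattered E s Y)}
      = stable_partitions E (econflict E s) r"
  proof -
    have "(\<forall>Y\<in>Q. escattered E s Y) \<longleftrightarrow> (\<forall>Y\<in>Q. stable_set (econflict E s) Y)"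
      if "partition_on E Q" for Q
      using escattered_iff_stable_set partition_onD1[OF that] by blast
    thus ?thesis unfolding stable_partitions_def by blast
  qed
  moreover have "card (stable_partitions V (vconflict E s) (Suc r)) = card (stable_partitions E (econflict E s) r)"
    using card_vertex_partitions_eq_edge_partitions assms(1,4) by blast
  moreover have "finite (stable_partitions V (vconflict E s) (Suc r))"
    "finite (stable_partitions E (econflict E s) r)"
    using finite_stable_partitions finite_V finite_E by blast+
  ultimately show ?thesis using finite_same_card_bij by metis
qed

end
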